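(* Let $H,U$ be Hilbert spaces, $1<q<\infty$, and let $m:\mathcal{F}\to L(H,U)$ be a countably additive vector measure with finite $q$-variation $\overline{m}_q^{\mathbb{P}}(\Omega)<\infty$. Let $A\in\mathcal{F}$ with $\mathbb{P}(A)>0$ be such that $m(A_1)u=m(A_2)u$ for all $u\in H$ and all $A_1,A_2\in\mathcal{F}$ with $A_1,A_2\subset A$ and $\mathbb{P}(A_1)=\mathbb{P}(A_2)$. Then $$\mathbb{P}(B\mid A)\,m(A)=m(A\cap B)\quad\text{for all }B\in\mathcal{F},$$ where $\mathbb{P}(B\mid A)=\mathbb{P}(A\cap B)/\mathbb{P}(A)$.
   Context: $(\Omega,\mathcal{F},\mathbb{P})$ is a complete atomless probability space with $\Omega$ Polish and $\mathcal{F}$ its Borel $\sigma$-field. With $\frac1p+\frac1q=1$, the $q$-variation of $m$ is $\overline{m}_q^{\mathbb{P}}(\Omega):=\sup\{\sum_{i=1}^n\|m(A_i)x_i\|_U:\ Y=\sum_{i=1}^n\mathbf{1}_{A_i}x_i,\ A_i\in\mathcal{F}\text{ pairwise disjoint},\ x_i\in H,\ \mathbb{E}\|Y\|_H^p\le1\}$. *)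

theory Defs
  imports "HOL-Probability.Probability"
begin

definition atomless :: "'a measure \<Rightarrow> bool" where
  "atomless M \<longleftrightarrow> (\<forall>A\<in>sets M. 0 < measure M A \<longrightarrow>
     (\<exists>B\<in>sets M. B \<subseteq> A \<and> 0 < measure M B \<and> measure M B < measure M A))"

definition countably_additive_vm ::
  "'a measure \<Rightarrow> ('a set \<Rightarrow> ('h::real_normed_vector \<Rightarrow>\<^sub>L 'u::real_normed_vector)) \<Rightarrow> bool" where
  "countably_additive_vm M m \<longleftrightarrow>
     (\<forall>A :: nat \<Rightarrow> 'a set. range A \<subseteq> sets M \<longrightarrow> disjoint_family A \<longrightarrow>
        (\<lambda>i. m (A i)) sums m (\<Union>i. A i))"

text \<open>The q-variation of m over the whole space, with 1/p + 1/q = 1, i.e. p = q/(q-1).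
  Supremum over simple functions Y = sum_i 1_{A_i} x_i with disjoint A_i and E||Y||^p <= 1.\<close>
definition q_variation ::
  "'a measure \<Rightarrow> ('a set \<Rightarrow> ('h::real_normed_vector \<Rightarrow>\<^sub>L 'u::real_normed_vector)) \<Rightarrow> real \<Rightarrow> ennreal" where
  "q_variation M m q =
     (let p = q / (q - 1) in
      SUP (n, A, x) \<in> {(n :: nat, A :: nat \<Rightarrow> 'a set, x :: nat \<Rightarrow> 'h).
            (\<forall>i<n. A i \<in> sets M) \<and> disjoint_family_on A {..<n} \<and>
            (\<integral>\<^sup>+ \<omega>. ennreal (norm (\<Sum>i<n. indicator (A i) \<omega> *\<^sub>R x i) powr p) \<partial>M) \<le> 1}.
        ennreal (\<Sum>i<n. norm (blinfun_apply (m (A i)) (x i))))"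

end

theory Submission
  imports Defs
begin

text \<open>On subsets of A the value of m depends only on their measure, and an atomless measure takes
  every intermediate value on subsets (Sierpinski). Splitting A into N pieces of equal measure and
  adding them up therefore gives m D = (P D / P A) m A whenever this ratio is rational. A general
  D \<subseteq> A is exhausted by an increasing sequence of subsets whose relative measures are the dyadic
  approximations of P D / P A, and countable additivity of m passes to the limit.\<close>

definition dyadic_floor :: "real \<Rightarrow> nat \<Rightarrow> real" where
  "dyadic_floor x n = of_int \<lfloor>2 ^ n * x\<rfloor> / 2 ^ n"

lemma dyadic_floor_le: "dyadic_floor x n \<le> x"
  by (simp add: dyadic_floor_def divide_le_eq mult.commute)

lemma dyadic_floor_nonneg: "0 \<le> x \<Longrightarrow> 0 \<le> dyadic_floor x n"
  by (simp add: dyadic_floor_def)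

lemma dyadic_floor_Rats: "dyadic_floor x n \<in> \<rat>"
  by (simp add: dyadic_floor_def)

lemma incseq_dyadic_floor: "incseq (dyadic_floor x)"
proof (rule incseq_SucI)
  fix n
  have "2 * \<lfloor>2 ^ n * x\<rfloor> \<le> \<lfloor>2 ^ Suc n * x\<rfloor>"
    by (simp add: le_floor_iff)
  then have "2 * of_int \<lfloor>2 ^ n * x\<rfloor> \<le> (of_int \<lfloor>2 ^ Suc n * x\<rfloor> :: real)"
    by (metis of_int_le_iff of_int_mult of_int_numeral)
  then show "dyadic_floor x n \<le> dyadic_floor x (Suc n)"
    by (simp add: dyadic_floor_def field_simps)
qed

lemma dyadic_floor_tendsto: "dyadic_floor x \<longlonglongrightarrow> x"
proof (rule tendsto_sandwich[of "\<lambda>n. x - 1 / 2 ^ n" _ _ "\<lambda>n. x"])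
  have "x - 1 / 2 ^ n \<le> dyadic_floor x n" for n
  proof -
    have "x - 1 / 2 ^ n = (2 ^ n * x - 1) / 2 ^ n"
      by (simp add: field_simps)
    also have "\<dots> \<le> dyadic_floor x n"
      unfolding dyadic_floor_def by (rule divide_right_mono) (linarith, simp)
    finally show ?thesis .
  qed
  then show "\<forall>\<^sub>F n in sequentially. x - 1 / 2 ^ n \<le> dyadic_floor x n"
    by simp
  show "(\<lambda>n. x - 1 / 2 ^ n) \<longlonglongrightarrow> x"
    using tendsto_diff[OF tendsto_const LIMSEQ_divide_realpow_zero[of 2 1]] by simp
qed (simp_all add: dyadic_floor_le)

lemma (in finite_measure) atomless_small_subset:
  assumes "atomless M" "C \<in> sets M" "0 < measure M C" "0 < e"
  obtains E where "E \<in> sets M" "E \<subseteq> C" "0 < measure M E" "measure M E < e"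
proof -
  have halving: "\<exists>E\<in>sets M. E \<subseteq> C \<and> 0 < measure M E \<and> measure M E \<le> measure M C / 2 ^ n" for n
  proof (induction n)
    case 0
    then show ?case using assms by auto
  next
    case (Suc n)
    then obtain E where E: "E \<in> sets M" "E \<subseteq> C" "0 < measure M E" "measure M E \<le> measure M C / 2 ^ n"
      by blast
    with \<open>atomless M\<close> obtain B where B: "B \<in> sets M" "B \<subseteq> E" "0 < measure M B" "measure M B < measure M E"
      unfolding atomless_def by blast
    have split: "measure M E = measure M B + measure M (E - B)"
      using B E by (simp add: finite_measure_Diff)
    show ?case
    proof (cases "measure M B \<le> measure M E / 2")
      case True
      then show ?thesis using B E by (intro bexI[of _ B]) auto
    next
      case False
      then show ?thesis using B E split by (intro bexI[of _ "E - B"]) auto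
    qed
  qed
  obtain n where "(1 / 2) ^ n < e / measure M C"
    using real_arch_pow_inv[of "e / measure M C" "1 / 2"] assms by auto
  then have "measure M C / 2 ^ n < e"
    using assms by (simp add: field_simps power_one_over)
  with halving[of n] that show thesis by force
qed

lemma (in finite_measure) atomless_exists_subset_measure:
  assumes "atomless M" "C \<in> sets M" "0 \<le> x" "x \<le> measure M C"
  obtains D where "D \<in> sets M" "D \<subseteq> C" "measure M D = x"
proof -
  define fits where "fits D E \<longleftrightarrow> E \<in> sets M \<and> E \<subseteq> C - D \<and> measure M E \<le> x - measure M D" for D E
  define room where "room D = Sup {measure M E | E. fits D E}" for D
  have bdd: "bdd_above {measure M E | E. fits D E}" for D
    by (auto simp: bdd_above_def fits_def intro!: exI[of _ "measure M (space M)"] bounded_measure)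
  have room_upper: "measure M E \<le> room D" if "fits D E" for D E
    unfolding room_def using that bdd by (intro cSup_upper) auto
  have greedy_step: "\<exists>E. fits D E \<and> room D / 2 \<le> measure M E" if "measure M D \<le> x" for D
  proof -
    have empty_fits: "fits D {}"
      using that by (simp add: fits_def)
    show ?thesis
    proof (cases "room D = 0")
      case True
      with empty_fits show ?thesis by auto
    next
      case False
      with room_upper[OF empty_fits] have "room D / 2 < room D"
        by simp
      then obtain r where "r \<in> {measure M E | E. fits D E}" "room D / 2 < r"
        unfolding room_def using less_cSup_iff[OF _ bdd] empty_fits by blast
      then show ?thesis by force
    qed
  qed
  have "\<exists>D. \<forall>n. (D n \<in> sets M \<and> D n \<subseteq> C \<and> measure M (D n) \<le> x) \<and>
      D n \<subseteq> D (Suc n) \<and> measure M (D n) + room (D n) / 2 \<le> measure M (D (Suc n))"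
  proof (rule dependent_nat_choice)
    show "\<exists>D. D \<in> sets M \<and> D \<subseteq> C \<and> measure M D \<le> x"
      using assms by (intro exI[of _ "{}"]) auto
  next
    fix D n assume D: "D \<in> sets M \<and> D \<subseteq> C \<and> measure M D \<le> x"
    then obtain E where E: "fits D E" "room D / 2 \<le> measure M E"
      using greedy_step by blast
    then have "measure M (D \<union> E) = measure M D + measure M E"
      using D by (intro finite_measure_Union) (auto simp: fits_def)
    with D E show "\<exists>D'. (D' \<in> sets M \<and> D' \<subseteq> C \<and> measure M D' \<le> x) \<and>
        D \<subseteq> D' \<and> measure M D + room D / 2 \<le> measure M D'"
      by (intro exI[of _ "D \<union> E"]) (auto simp: fits_def)
  qed
  then obtain D where D: "\<And>n. D n \<in> sets M \<and> D n \<subseteq> C \<and> measure M (D n) \<le> x"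
    and grow: "\<And>n. D n \<subseteq> D (Suc n) \<and> measure M (D n) + room (D n) / 2 \<le> measure M (D (Suc n))"
    by blast
  let ?U = "\<Union>n. D n"
  have U: "?U \<in> sets M" "?U \<subseteq> C"
    using D by auto
  have lim: "(\<lambda>n. measure M (D n)) \<longlonglongrightarrow> measure M ?U"
    using D grow by (intro finite_Lim_measure_incseq incseq_SucI) auto
  have "measure M ?U \<le> x"
    using D by (intro LIMSEQ_le_const2[OF lim]) auto
  moreover have "x \<le> measure M ?U"
  proof (rule ccontr)
    assume short: "\<not> x \<le> measure M ?U"
    have "measure M (C - ?U) = measure M C - measure M ?U"
      using U assms by (intro finite_measure_Diff) auto
    then obtain E where E: "E \<in> sets M" "E \<subseteq> C - ?U" "0 < measure M E" "measure M E < x - measure M ?U"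
      using atomless_small_subset[OF \<open>atomless M\<close>, of "C - ?U" "x - measure M ?U"] U assms short
      by auto
    \<comment> \<open>E still fits beside every D n, so each greedy step gains at least half of its measure\<close>
    have "measure M E / 2 \<le> measure M (D (Suc n)) - measure M (D n)" for n
    proof -
      have "measure M (D n) \<le> measure M ?U"
        using U by (intro finite_measure_mono) auto
      then have "fits (D n) E"
        using E by (auto simp: fits_def)
      then show ?thesis
        using room_upper grow[of n] by fastforce
    qed
    moreover have "(\<lambda>n. measure M (D (Suc n)) - measure M (D n)) \<longlonglongrightarrow> 0"
      using tendsto_diff[OF LIMSEQ_Suc[OF lim] lim] by simp
    ultimately have "measure M E / 2 \<le> 0"
      by (intro LIMSEQ_le_const) auto
    with E show False by simp
  qed
  ultimately show thesis
    using U that by auto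
qed

lemma (in finite_measure) atomless_incseq_subsets_measure:
  assumes "atomless M" "C \<in> sets M" "incseq s" "\<And>n. 0 \<le> s n" "\<And>n. s n \<le> measure M C"
  obtains D where "incseq D" "\<And>n. D n \<in> sets M" "\<And>n. D n \<subseteq> C" "\<And>n. measure M (D n) = s n"
proof -
  have "\<exists>D. \<forall>n. (D n \<in> sets M \<and> D n \<subseteq> C \<and> measure M (D n) = s n) \<and> D n \<subseteq> D (Suc n)"
  proof (rule dependent_nat_choice)
    show "\<exists>D. D \<in> sets M \<and> D \<subseteq> C \<and> measure M D = s 0"
      using atomless_exists_subset_measure[OF assms(1,2)] assms(4,5) by metis
  next
    fix D n assume D: "D \<in> sets M \<and> D \<subseteq> C \<and> measure M D = s n"
    have "measure M (C - D) = measure M C - s n"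
      using D assms(2) by (simp add: finite_measure_Diff)
    moreover have "s n \<le> s (Suc n)"
      using \<open>incseq s\<close> by (simp add: incseq_Suc_iff)
    ultimately obtain E where E: "E \<in> sets M" "E \<subseteq> C - D" "measure M E = s (Suc n) - s n"
      using atomless_exists_subset_measure[OF assms(1), of "C - D" "s (Suc n) - s n"] D assms(2,5)
      by auto
    then have "measure M (D \<union> E) = s (Suc n)"
      using D by (subst finite_measure_Union) auto
    with D E show "\<exists>D'. (D' \<in> sets M \<and> D' \<subseteq> C \<and> measure M D' = s (Suc n)) \<and> D \<subseteq> D'"
      by (intro exI[of _ "D \<union> E"]) auto
  qed
  then show thesis
    using that by (metis incseq_SucI)
qed

lemma countably_additive_vm_empty:
  assumes "countably_additive_vm M m"
  shows "m {} = 0"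
proof -
  have "(\<lambda>i. m ((\<lambda>_::nat. {}) i)) sums m (\<Union>i. (\<lambda>_::nat. {}) i)"
    using assms unfolding countably_additive_vm_def by (auto simp: disjoint_family_on_def)
  then have "(\<lambda>_::nat. m {}) sums m {}"
    by simp
  then have "(\<lambda>_::nat. m {}) \<longlonglongrightarrow> 0"
    by (intro summable_LIMSEQ_zero sums_summable)
  then show ?thesis
    by (simp add: LIMSEQ_const_iff)
qed

lemma countably_additive_vm_Un:
  assumes "countably_additive_vm M m" "X \<in> sets M" "Y \<in> sets M" "X \<inter> Y = {}"
  shows "m (X \<union> Y) = m X + m Y"
proof -
  have "range (binaryset X Y) \<subseteq> sets M"
    using assms(2,3) by (simp add: range_binaryset_eq)
  moreover have "disjoint_family (binaryset X Y)"
    using assms(4) by (auto simp: disjoint_family_on_def binaryset_def)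
  ultimately have "(\<lambda>i. m (binaryset X Y i)) sums m (\<Union>i. binaryset X Y i)"
    using assms(1) unfolding countably_additive_vm_def by blast
  moreover have "(\<lambda>i. m (binaryset X Y i)) sums (m X + m Y)"
    by (rule binaryset_sums) (rule countably_additive_vm_empty[OF assms(1)])
  ultimately show ?thesis
    by (simp add: UN_binaryset_eq sums_unique2)
qed

lemma countably_additive_vm_incseq:
  assumes "countably_additive_vm M m" "range D \<subseteq> sets M" "incseq D"
  shows "(\<lambda>n. m (D n)) \<longlonglongrightarrow> m (\<Union>n. D n)"
proof -
  have "(\<lambda>i. m (disjointed D i)) sums m (\<Union>n. D n)"
    using assms sets.range_disjointed_sets[OF assms(2)] disjoint_family_disjointed UN_disjointed_eq
    unfolding countably_additive_vm_def by metis
  then have "(\<lambda>n. \<Sum>i<Suc n. m (disjointed D i)) \<longlonglongrightarrow> m (\<Union>n. D n)"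
    unfolding sums_def by (rule LIMSEQ_Suc)
  moreover have "(\<Sum>i<Suc n. m (disjointed D i)) = m (D n)" for n
  proof (induction n)
    case (Suc n)
    have step: "disjointed D (Suc n) = D (Suc n) - D n"
      using \<open>incseq D\<close> by (simp add: disjointed_mono incseq_def mono_def)
    have "D (Suc n) = D n \<union> (D (Suc n) - D n)"
      using \<open>incseq D\<close> by (auto simp: incseq_Suc_iff)
    then have "m (D (Suc n)) = m (D n) + m (disjointed D (Suc n))"
      using assms unfolding step by (metis countably_additive_vm_Un Diff_disjoint range_subsetD sets.Diff)
    with Suc show ?case
      by simp
  qed simp
  ultimately show ?thesis
    by simp
qed

locale measure_determined_vm = finite_measure M
  for M :: "'a measure"
    and m :: "'a set \<Rightarrow> ('h::real_normed_vector \<Rightarrow>\<^sub>L 'u::real_normed_vector)"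
    and A :: "'a set" +
  assumes atomless: "atomless M"
    and countably_additive: "countably_additive_vm M m"
    and A_sets: "A \<in> sets M"
    and measure_determined: "\<And>X Y. X \<in> sets M \<Longrightarrow> Y \<in> sets M \<Longrightarrow> X \<subseteq> A \<Longrightarrow> Y \<subseteq> A \<Longrightarrow>
      measure M X = measure M Y \<Longrightarrow> m X = m Y"
begin

lemma vm_multiple_of_measure_multiple:
  assumes "D \<in> sets M" "D \<subseteq> A" "D0 \<in> sets M" "D0 \<subseteq> A"
    and "measure M D = real k * measure M D0"
  shows "m D = real k *\<^sub>R m D0"
  using assms(1,2,5)
proof (induction k arbitrary: D)
  case 0
  then have "m D = m {}"
    by (intro measure_determined) auto
  then show ?case
    using countably_additive_vm_empty[OF countably_additive] by simp
next
  case (Suc k)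
  have "measure M D0 \<le> measure M D"
    using Suc.prems(3) measure_nonneg[of M D0] by (simp add: algebra_simps)
  then obtain D1 where D1: "D1 \<in> sets M" "D1 \<subseteq> D" "measure M D1 = measure M D0"
    using atomless_exists_subset_measure[OF atomless Suc.prems(1)] measure_nonneg by metis
  have "measure M (D - D1) = real k * measure M D0"
    using D1 Suc.prems by (simp add: finite_measure_Diff algebra_simps)
  then have "m (D - D1) = real k *\<^sub>R m D0"
    using D1 Suc.prems(1,2) by (intro Suc.IH) auto
  moreover have "m D1 = m D0"
    using D1 Suc.prems(2) assms(3,4) by (intro measure_determined) auto
  moreover have "m D = m D1 + m (D - D1)"
    using countably_additive_vm_Un[OF countably_additive, of D1 "D - D1"] D1 Suc.prems
    by (simp add: Un_absorb1)
  ultimately show ?case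
    by (simp add: algebra_simps)
qed

lemma measure_subset_eq_ratio_mult:
  assumes "D \<in> sets M" "D \<subseteq> A"
  shows "measure M D = measure M D / measure M A * measure M A"
  using finite_measure_mono[OF assms(2) A_sets] measure_nonneg[of M D]
  by (cases "measure M A = 0") auto

lemma vm_proportional_Rats:
  assumes "D \<in> sets M" "D \<subseteq> A" "measure M D / measure M A \<in> \<rat>"
  shows "m D = (measure M D / measure M A) *\<^sub>R m A"
proof -
  obtain k N :: nat where N: "N \<noteq> 0" and ratio: "measure M D / measure M A = real k / real N"
    using assms(3) by (elim Rats_abs_nat_div_natE) simp
  have "measure M A / real N \<le> measure M A"
    using N measure_nonneg[of M A] by (simp add: divide_le_eq mult_le_cancel_left1)
  then obtain D0 where D0: "D0 \<in> sets M" "D0 \<subseteq> A" "measure M D0 = measure M A / real N"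
    using atomless_exists_subset_measure[OF atomless A_sets]
    by (metis divide_nonneg_nonneg measure_nonneg of_nat_0_le_iff)
  have "m A = real N *\<^sub>R m D0"
    using D0 N A_sets by (intro vm_multiple_of_measure_multiple) auto
  moreover have "m D = real k *\<^sub>R m D0"
    using measure_subset_eq_ratio_mult[OF assms(1,2)] D0 assms(1,2) ratio
    by (intro vm_multiple_of_measure_multiple) auto
  ultimately show ?thesis
    using N ratio by simp
qed

text \<open>No positivity of measure M A is needed: if it vanishes, both sides are 0, since 0 / 0 = 0
  and m D = m {}.\<close>

theorem vm_proportional:
  assumes "D \<in> sets M" "D \<subseteq> A"
  shows "m D = (measure M D / measure M A) *\<^sub>R m A"
proof (cases "measure M A = 0")
  case True
  then show ?thesis
    using assms by (intro vm_proportional_Rats) auto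
next
  case False
  then have A_pos: "0 < measure M A"
    by (simp add: zero_less_measure_iff)
  define y where "y = measure M D / measure M A"
  define s where "s n = dyadic_floor y n * measure M A" for n
  have "0 \<le> y"
    by (simp add: y_def)
  have "incseq s"
    using incseq_dyadic_floor[of y] A_pos by (simp add: incseq_def s_def)
  moreover have "0 \<le> s n" "s n \<le> measure M D" for n
    using dyadic_floor_nonneg[OF \<open>0 \<le> y\<close>] dyadic_floor_le[of y n] A_pos
    by (simp_all add: s_def y_def field_simps)
  ultimately obtain E where E: "incseq E" "\<And>n. E n \<in> sets M" "\<And>n. E n \<subseteq> D"
    "\<And>n. measure M (E n) = s n"
    using atomless_incseq_subsets_measure[OF atomless assms(1)] by metis
  have "m (E n) = dyadic_floor y n *\<^sub>R m A" for n
    using vm_proportional_Rats[of "E n"] E(2-4)[of n] assms A_pos dyadic_floor_Rats by (simp add: s_def)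
  then have "(\<lambda>n. m (E n)) \<longlonglongrightarrow> y *\<^sub>R m A"
    by (simp add: dyadic_floor_tendsto tendsto_scaleR)
  moreover have "(\<lambda>n. m (E n)) \<longlonglongrightarrow> m (\<Union>n. E n)"
    using E by (intro countably_additive_vm_incseq[OF countably_additive]) auto
  moreover have "m (\<Union>n. E n) = m D"
  proof (rule measure_determined)
    have "(\<lambda>n. measure M (E n)) \<longlonglongrightarrow> measure M (\<Union>n. E n)"
      using E by (intro finite_Lim_measure_incseq) auto
    moreover have "(\<lambda>n. measure M (E n)) \<longlonglongrightarrow> y * measure M A"
      unfolding E(4) s_def by (intro tendsto_mult_right dyadic_floor_tendsto)
    ultimately show "measure M (\<Union>n. E n) = measure M D"
      using A_pos LIMSEQ_unique by (fastforce simp: y_def)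
  qed (use E assms in blast)+
  ultimately show ?thesis
    using LIMSEQ_unique y_def by metis
qed

end

theorem lemma3p1:
  fixes M :: "'a::polish_space measure"
    and m :: "'a set \<Rightarrow> ('h::{real_inner, complete_space} \<Rightarrow>\<^sub>L 'u::{real_inner, complete_space})"
    and q :: real
    and A :: "'a set"
  assumes "prob_space M"
    and "sets M = sets borel"
    and "atomless M"
    and "1 < q"
    and "countably_additive_vm M m"
    and "q_variation M m q < \<infinity>"
    and "A \<in> sets M"
    and "0 < measure M A"
    and "\<And>A1 A2 u. A1 \<in> sets M \<Longrightarrow> A2 \<in> sets M \<Longrightarrow> A1 \<subseteq> A \<Longrightarrow> A2 \<subseteq> A \<Longrightarrow>
           measure M A1 = measure M A2 \<Longrightarrow> blinfun_apply (m A1) u = blinfun_apply (m A2) u"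
  shows "\<forall>B\<in>sets M. (measure M (A \<inter> B) / measure M A) *\<^sub>R m A = m (A \<inter> B)"
proof -
  interpret prob_space M
    by fact
  have "m X = m Y" if "X \<in> sets M" "Y \<in> sets M" "X \<subseteq> A" "Y \<subseteq> A" "measure M X = measure M Y" for X Y
    using assms(9)[OF that] by (rule blinfun_eqI)
  then interpret measure_determined_vm M m A
    using assms(3,5,7) by unfold_locales
  show ?thesis
    using assms(7) by (auto intro!: vm_proportional[symmetric])
qed

end
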